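(* Let $\mathfrak g$ be of type $A_n$ and $J\subseteq I$. Then for $s\ge1$ $$\mathbf A_{s,J}=\bigl\{\{\alpha_{i_k,j_k}\}_{1\le k\le s}\in\mathbf A_s:\ i_k,j_k\notin J\text{ for all }k\bigr\}.$$ In particular $\#\mathbf A_{s,J}=\binom{n-\#J}{2s}+\binom{n-\#J}{2s-1}$ for $s\ge1$ and $\sum_{s\ge0}\#\mathbf A_{s,J}=2^{n-\#J}$.
   Context: Simple roots $\alpha_1,\dots,\alpha_n$ of $A_n$ numbered as in Bourbaki, $I=\{1,\dots,n\}$; $\alpha_{i,j}=\alpha_i+\dots+\alpha_j$ for $i\le j$, $\theta=\alpha_{1,n}$. For $\eta=\sum_i d_i(\eta)\alpha_i$, $R^+(J)=\{\alpha\in R^+:d_i(\alpha)=0\ \forall i\notin J\}$. A $J$-antichain is a subset $A\subseteq R^+$ with $A\cap R^+(J)=\emptyset$, distinct elements pairwise incomparable (order: $\lambda\le\mu$ iff $\mu-\lambda$ is a nonnegative integer combination of simple roots), and $\alpha-\alpha_j\notin R$ for $\alpha\in A$, $j\in J$. $\Phi(A)=\{\alpha\in R^+:\alpha\ge\beta$ for some $\beta\in A\}$; $A$ is abelian if $\beta_1+\beta_2\notin R$ for all $\beta_1,\beta_2\in\Phi(A)$. $\mathbf A_{s,J}$ is the set of abelian $J$-antichains with $s$ elements, $\mathbf A_{0,J}$ consists of the empty antichain, and $\mathbf A_s=\mathbf A_{s,\emptyset}$, which equals $\{\{\alpha_{i_k,j_k}\}_{1\le k\le s}: i_1<\dots<i_s\le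 j_1<\dots<j_s\}$. Convention: $\binom{m}{k}=0$ if $k>m$. *)

theory Defs
  imports Complex_Main
begin

text \<open>An element eta = sum_i d_i(eta) alpha_i of the root
lattice is represented by its coefficient function (d_i(eta))_i :: nat => int
(only indices in I = {1..n} are ever nonzero for roots).\<close>

type_synonym rootvec = "nat \<Rightarrow> int"

definition alpha :: "nat \<Rightarrow> nat \<Rightarrow> rootvec" where
  "alpha i j = (\<lambda>k. if i \<le> k \<and> k \<le> j then 1 else 0)"

definition simple :: "nat \<Rightarrow> rootvec" where
  "simple j = (\<lambda>k. if k = j then 1 else 0)"

definition posroots :: "nat \<Rightarrow> rootvec set" where
  "posroots n = {alpha i j | i j. 1 \<le> i \<and> i \<le> j \<and> j \<le> n}"

definition roots :: "nat \<Rightarrow> rootvec set" where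
  "roots n = posroots n \<union> (\<lambda>a k. - a k) ` posroots n"

text \<open>lambda <= mu iff mu - lambda is a nonnegative integer combination of simple roots,
i.e. all its coefficients are nonnegative.\<close>
definition root_le :: "rootvec \<Rightarrow> rootvec \<Rightarrow> bool" where
  "root_le l m = (\<forall>k. l k \<le> m k)"

definition posroots_J :: "nat \<Rightarrow> nat set \<Rightarrow> rootvec set" where
  "posroots_J n J = {a \<in> posroots n. \<forall>i \<in> {1..n} - J. a i = 0}"

definition J_antichain :: "nat \<Rightarrow> nat set \<Rightarrow> rootvec set \<Rightarrow> bool" where
  "J_antichain n J A \<longleftrightarrow>
     A \<subseteq> posroots n \<and> A \<inter> posroots_J n J = {} \<and>
     (\<forall>b1\<in>A. \<forall>b2\<in>A. b1 \<noteq> b2 \<longrightarrow> \<not> root_le b1 b2) \<and>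
     (\<forall>a\<in>A. \<forall>j\<in>J. (\<lambda>k. a k - simple j k) \<notin> roots n)"

definition Phi :: "nat \<Rightarrow> rootvec set \<Rightarrow> rootvec set" where
  "Phi n A = {a \<in> posroots n. \<exists>b\<in>A. root_le b a}"

definition abelian :: "nat \<Rightarrow> rootvec set \<Rightarrow> bool" where
  "abelian n A \<longleftrightarrow> (\<forall>b1\<in>Phi n A. \<forall>b2\<in>Phi n A. (\<lambda>k. b1 k + b2 k) \<notin> roots n)"

definition AsJ :: "nat \<Rightarrow> nat \<Rightarrow> nat set \<Rightarrow> rootvec set set" where
  "AsJ n s J = {A. J_antichain n J A \<and> abelian n A \<and> finite A \<and> card A = s}"

end

theory Submission
  imports Defs
begin

(* A positive root alpha_{i,j} of A_n is identified with the interval (i, j), a set of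
   positive roots with a family of intervals.  Then root_le is containment of intervals,
   abelianness says that any two intervals meet (otherwise alpha_{k,i-1} + alpha_{i,j} is a
   root), and the two conditions involving J say that no endpoint lies in J.  Calling such
   families linked, A_{s,J} is the image of the linked families of s intervals with
   endpoints in K = {1..n} - J (AsJ_eq_linked_families); the first claim follows by
   comparing J with the empty set (AsJ_restrict).
   A linked family of s intervals is determined by its endpoint set S, a subset of K with
   2s or 2s - 1 elements: in increasing order, the first s elements of S are the left and
   the last s the right endpoints (card_linked_families).  This gives the binomial count,
   and since each subset of K has exactly one such s, the counts sum to 2^#K. *)

lemma alpha_eq:
  assumes "a \<le> b" and "alpha i j = alpha a b"
  shows "i = a \<and> j = b"
proof -
  have "alpha i j x = alpha a b x" for x using assms(2) by simp
  from this[of a] this[of b] this[of i] this[of j] assms(1) show ?thesis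
    unfolding alpha_def by (auto split: if_splits)
qed

lemma alpha_in_roots:
  assumes "1 \<le> i" "i \<le> j" "j \<le> n"
  shows "alpha i j \<in> roots n"
  using assms unfolding roots_def posroots_def by blast

lemma root_le_alpha:
  assumes "i \<le> j"
  shows "root_le (alpha i j) (alpha k l) \<longleftrightarrow> k \<le> i \<and> j \<le> l"
proof
  assume "root_le (alpha i j) (alpha k l)"
  then have "alpha i j i \<le> alpha k l i" "alpha i j j \<le> alpha k l j"
    unfolding root_le_def by auto
  with assms show "k \<le> i \<and> j \<le> l" unfolding alpha_def by (auto split: if_splits)
qed (auto simp: root_le_def alpha_def)

(* All coefficients of a root are at most 1; this is what makes sums of overlapping
   roots non-roots. *)
lemma roots_coeff_le_one: "r \<in> roots n \<Longrightarrow> r k \<le> 1"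
  unfolding roots_def posroots_def alpha_def by auto

lemma alpha_concat:
  "k \<le> m \<Longrightarrow> m < j \<Longrightarrow> (\<lambda>x. alpha k m x + alpha (Suc m) j x) = alpha k j"
  unfolding alpha_def fun_eq_iff by auto

lemma alpha_minus_first:
  "i < j \<Longrightarrow> (\<lambda>k. alpha i j k - simple i k) = alpha (Suc i) j"
  unfolding alpha_def simple_def fun_eq_iff by auto

lemma alpha_minus_last:
  "i < j \<Longrightarrow> (\<lambda>k. alpha i j k - simple j k) = alpha i (j - 1)"
  unfolding alpha_def simple_def fun_eq_iff by auto

lemma alpha_minus_inner_not_root:
  assumes "i \<le> j" "l \<noteq> i" "l \<noteq> j"
  shows "(\<lambda>k. alpha i j k - simple l k) \<notin> roots n"
proof
  let ?v = "\<lambda>k. alpha i j k - simple l k"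
  assume "?v \<in> roots n"
  then consider a b where "?v = alpha a b" | a b where "?v = (\<lambda>k. - alpha a b k)"
    unfolding roots_def posroots_def by auto
  then show False
  proof cases
    case 1
    then have "?v x = alpha a b x" for x by metis
    from this[of i] this[of j] this[of l] assms show False
      unfolding alpha_def simple_def by (auto split: if_splits)
  next
    case 2
    then have "?v i = - alpha a b i" by metis
    with assms show False unfolding alpha_def simple_def by (auto split: if_splits)
  qed
qed

definition intervals :: "nat \<Rightarrow> (nat \<times> nat) set" where
  "intervals n = {(i, j). 1 \<le> i \<and> i \<le> j \<and> j \<le> n}"

definition root_family :: "(nat \<times> nat) set \<Rightarrow> rootvec set" where
  "root_family P = (\<lambda>(i, j). alpha i j) ` P"

definition linked :: "nat set \<Rightarrow> (nat \<times> nat) set \<Rightarrow> bool" where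
  "linked K P \<longleftrightarrow>
     (\<forall>i j. (i, j) \<in> P \<longrightarrow> i \<in> K \<and> j \<in> K \<and> i \<le> j) \<and>
     (\<forall>i j k l. (i, j) \<in> P \<longrightarrow> (k, l) \<in> P \<longrightarrow> (i, j) \<noteq> (k, l) \<longrightarrow> \<not> (k \<le> i \<and> j \<le> l)) \<and>
     (\<forall>i j k l. (i, j) \<in> P \<longrightarrow> (k, l) \<in> P \<longrightarrow> i \<le> l)"

definition linked_families :: "nat set \<Rightarrow> nat \<Rightarrow> (nat \<times> nat) set set" where
  "linked_families K s = {P. linked K P \<and> card P = s}"

lemma inj_on_alpha: "inj_on (\<lambda>(i, j). alpha i j) {(i, j). i \<le> j}"
  by (auto simp: inj_on_def dest: alpha_eq)

lemma finite_intervals: "finite (intervals n)"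
  by (rule finite_subset[of _ "{1..n} \<times> {1..n}"]) (auto simp: intervals_def)

lemma posroots_eq: "posroots n = root_family (intervals n)"
  unfolding posroots_def root_family_def intervals_def by auto

lemma root_family_memI: "(i, j) \<in> P \<Longrightarrow> alpha i j \<in> root_family P"
  unfolding root_family_def by (rule image_eqI[where x = "(i, j)"]) simp_all

lemma root_family_memE:
  assumes "a \<in> root_family P"
  obtains i j where "(i, j) \<in> P" and "a = alpha i j"
  using assms unfolding root_family_def by auto

lemma ball_root_family: "(\<forall>a\<in>root_family P. Q a) \<longleftrightarrow> (\<forall>i j. (i, j) \<in> P \<longrightarrow> Q (alpha i j))"
  unfolding root_family_def by auto

lemma alpha_in_root_family_iff:
  assumes "P \<subseteq> {(i, j). i \<le> j}"
  shows "alpha i j \<in> root_family P \<longleftrightarrow> (i, j) \<in> P"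
proof
  assume "alpha i j \<in> root_family P"
  then obtain a b where "(a, b) \<in> P" "alpha i j = alpha a b" by (rule root_family_memE)
  with assms alpha_eq[of a b i j] show "(i, j) \<in> P" by auto
qed (rule root_family_memI)

lemma card_root_family: "P \<subseteq> {(i, j). i \<le> j} \<Longrightarrow> card (root_family P) = card P"
  unfolding root_family_def using inj_on_subset[OF inj_on_alpha] by (rule card_image)

lemma linked_ordered: "linked K P \<Longrightarrow> P \<subseteq> {(i, j). i \<le> j}"
  unfolding linked_def by auto

lemma antichain_iff_non_nested:
  assumes "P \<subseteq> {(i, j). i \<le> j}"
  shows "(\<forall>b1\<in>root_family P. \<forall>b2\<in>root_family P. b1 \<noteq> b2 \<longrightarrow> \<not> root_le b1 b2) \<longleftrightarrow>
    (\<forall>i j k l. (i, j) \<in> P \<longrightarrow> (k, l) \<in> P \<longrightarrow> (i, j) \<noteq> (k, l) \<longrightarrow> \<not> (k \<le> i \<and> j \<le> l))"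
    (is "?roots \<longleftrightarrow> ?intervals")
proof -
  have "?roots \<longleftrightarrow> (\<forall>i j k l. (i, j) \<in> P \<longrightarrow> (k, l) \<in> P \<longrightarrow>
      alpha i j \<noteq> alpha k l \<longrightarrow> \<not> root_le (alpha i j) (alpha k l))"
    unfolding root_family_def by fast
  also have "\<dots> \<longleftrightarrow> ?intervals"
  proof (intro iff_allI)
    fix i j k l
    show "((i, j) \<in> P \<longrightarrow> (k, l) \<in> P \<longrightarrow>
          alpha i j \<noteq> alpha k l \<longrightarrow> \<not> root_le (alpha i j) (alpha k l)) \<longleftrightarrow>
        ((i, j) \<in> P \<longrightarrow> (k, l) \<in> P \<longrightarrow> (i, j) \<noteq> (k, l) \<longrightarrow> \<not> (k \<le> i \<and> j \<le> l))"
      using assms alpha_eq[of k l i j] root_le_alpha[of i j k l] by auto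
  qed
  finally show ?thesis .
qed

(* Abelianness is the condition that all intervals meet: if (k, l) lies strictly left of
   (i, j), then alpha_{k,i-1} is in the upper ideal and alpha_{k,i-1} + alpha_{i,j} is a root;
   conversely two roots above meeting intervals share a coefficient >= 1 at a common point. *)
lemma abelian_iff_overlapping:
  assumes P: "P \<subseteq> intervals n"
  shows "abelian n (root_family P) \<longleftrightarrow> (\<forall>i j k l. (i, j) \<in> P \<longrightarrow> (k, l) \<in> P \<longrightarrow> i \<le> l)"
proof (intro iffI allI impI)
  fix i j k l
  assume ab: "abelian n (root_family P)" and ij: "(i, j) \<in> P" and kl: "(k, l) \<in> P"
  show "i \<le> l"
  proof (rule ccontr)
    assume "\<not> i \<le> l"
    from ij kl P have v: "1 \<le> i" "i \<le> j" "j \<le> n" "1 \<le> k" "k \<le> l" "l \<le> n"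
      unfolding intervals_def by auto
    have "alpha k (i - 1) \<in> posroots n"
      using v \<open>\<not> i \<le> l\<close> unfolding posroots_def
      by (intro CollectI exI[of _ k] exI[of _ "i - 1"]) auto
    moreover have "root_le (alpha k l) (alpha k (i - 1))"
      using root_le_alpha[of k l k "i - 1"] v \<open>\<not> i \<le> l\<close> by simp
    ultimately have "alpha k (i - 1) \<in> Phi n (root_family P)"
      using root_family_memI[OF kl] unfolding Phi_def by blast
    moreover have "alpha i j \<in> Phi n (root_family P)"
      using v root_family_memI[OF ij] unfolding Phi_def posroots_def root_le_def by blast
    moreover have "(\<lambda>x. alpha k (i - 1) x + alpha i j x) \<in> roots n"
      using alpha_concat[of k "i - 1" j] alpha_in_roots[of k j n] v \<open>\<not> i \<le> l\<close> by simp
    ultimately show False using ab unfolding abelian_def by blast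
  qed
next
  assume overlap: "\<forall>i j k l. (i, j) \<in> P \<longrightarrow> (k, l) \<in> P \<longrightarrow> i \<le> l"
  show "abelian n (root_family P)"
    unfolding abelian_def
  proof (intro ballI)
    fix b1 b2 assume "b1 \<in> Phi n (root_family P)" "b2 \<in> Phi n (root_family P)"
    then obtain a1 a2 where "a1 \<in> root_family P" "root_le a1 b1" "a2 \<in> root_family P" "root_le a2 b2"
      unfolding Phi_def by blast
    then obtain i j k l where ij: "(i, j) \<in> P" "root_le (alpha i j) b1"
      and kl: "(k, l) \<in> P" "root_le (alpha k l) b2"
      by (metis root_family_memE)
    define p where "p = max i k"
    have "i \<le> l" "k \<le> j" "i \<le> j" "k \<le> l" using overlap ij(1) kl(1) by blast+
    then have "alpha i j p = 1" "alpha k l p = 1" unfolding p_def alpha_def by auto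
    moreover have "alpha i j p \<le> b1 p" "alpha k l p \<le> b2 p"
      using ij(2) kl(2) unfolding root_le_def by blast+
    ultimately have "b1 p + b2 p > 1" by linarith
    then show "(\<lambda>x. b1 x + b2 x) \<notin> roots n"
      using roots_coeff_le_one[of "\<lambda>x. b1 x + b2 x" n p] by auto
  qed
qed

lemma endpoints_outside_J_iff:
  assumes "1 \<le> i" "i \<le> j" "j \<le> n"
  shows "(alpha i j \<notin> posroots_J n J \<and> (\<forall>l\<in>J. (\<lambda>k. alpha i j k - simple l k) \<notin> roots n))
    \<longleftrightarrow> i \<notin> J \<and> j \<notin> J"
proof
  assume outside: "i \<notin> J \<and> j \<notin> J"
  then have "i \<in> {1..n} - J" "alpha i j i \<noteq> 0" using assms unfolding alpha_def by auto
  then have "alpha i j \<notin> posroots_J n J" unfolding posroots_J_def by blast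
  moreover have "(\<lambda>k. alpha i j k - simple l k) \<notin> roots n" if "l \<in> J" for l
    using alpha_minus_inner_not_root[of i j l n] assms outside that by blast
  ultimately show "alpha i j \<notin> posroots_J n J \<and> (\<forall>l\<in>J. (\<lambda>k. alpha i j k - simple l k) \<notin> roots n)"
    by blast
next
  assume conds: "alpha i j \<notin> posroots_J n J \<and> (\<forall>l\<in>J. (\<lambda>k. alpha i j k - simple l k) \<notin> roots n)"
  show "i \<notin> J \<and> j \<notin> J"
  proof (cases "i = j")
    case True
    have "alpha i i \<in> posroots_J n J" if "i \<in> J"
      using assms that True unfolding posroots_J_def posroots_def alpha_def by auto
    with conds True show ?thesis by blast
  next
    case False
    then have "alpha (Suc i) j \<in> roots n" "alpha i (j - 1) \<in> roots n"
      using assms alpha_in_roots by simp_all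
    with conds alpha_minus_first[of i j] alpha_minus_last[of i j] assms False show ?thesis
      by auto
  qed
qed

lemma root_family_in_AsJ_iff:
  assumes P: "P \<subseteq> intervals n"
  shows "root_family P \<in> AsJ n s J \<longleftrightarrow> linked ({1..n} - J) P \<and> card P = s"
proof -
  have ordered: "P \<subseteq> {(i, j). i \<le> j}" using P unfolding intervals_def by auto
  have fin: "finite (root_family P)"
    using finite_subset[OF P finite_intervals] unfolding root_family_def by simp
  have pos: "root_family P \<subseteq> posroots n" using P posroots_eq unfolding root_family_def by auto
  have "(root_family P \<inter> posroots_J n J = {} \<and>
      (\<forall>a\<in>root_family P. \<forall>l\<in>J. (\<lambda>k. a k - simple l k) \<notin> roots n))
    \<longleftrightarrow> (\<forall>i j. (i, j) \<in> P \<longrightarrow>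
        alpha i j \<notin> posroots_J n J \<and> (\<forall>l\<in>J. (\<lambda>k. alpha i j k - simple l k) \<notin> roots n))"
    using ball_root_family[of P "\<lambda>a. a \<notin> posroots_J n J"]
      ball_root_family[of P "\<lambda>a. \<forall>l\<in>J. (\<lambda>k. a k - simple l k) \<notin> roots n"] by blast
  also have "\<dots> \<longleftrightarrow> (\<forall>i j. (i, j) \<in> P \<longrightarrow> i \<in> {1..n} - J \<and> j \<in> {1..n} - J \<and> i \<le> j)"
  proof (intro iff_allI imp_cong refl)
    fix i j assume "(i, j) \<in> P"
    with P have "1 \<le> i" "i \<le> j" "j \<le> n" by (auto simp: intervals_def)
    with endpoints_outside_J_iff[OF this]
    show "(alpha i j \<notin> posroots_J n J \<and> (\<forall>l\<in>J. (\<lambda>k. alpha i j k - simple l k) \<notin> roots n))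
        \<longleftrightarrow> i \<in> {1..n} - J \<and> j \<in> {1..n} - J \<and> i \<le> j" by auto
  qed
  finally have J_iff: "(root_family P \<inter> posroots_J n J = {} \<and>
      (\<forall>a\<in>root_family P. \<forall>l\<in>J. (\<lambda>k. a k - simple l k) \<notin> roots n))
    \<longleftrightarrow> (\<forall>i j. (i, j) \<in> P \<longrightarrow> i \<in> {1..n} - J \<and> j \<in> {1..n} - J \<and> i \<le> j)" .
  show ?thesis
    unfolding AsJ_def J_antichain_def linked_def mem_Collect_eq
      antichain_iff_non_nested[OF ordered] abelian_iff_overlapping[OF P] card_root_family[OF ordered]
    using fin pos J_iff by blast
qed

theorem AsJ_eq_linked_families:
  "AsJ n s J = root_family ` linked_families ({1..n} - J) s"
proof
  show "AsJ n s J \<subseteq> root_family ` linked_families ({1..n} - J) s"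
  proof
    fix A assume A: "A \<in> AsJ n s J"
    then have "A \<subseteq> (\<lambda>(i, j). alpha i j) ` intervals n"
      unfolding AsJ_def J_antichain_def posroots_eq root_family_def by blast
    then obtain P where P: "P \<subseteq> intervals n" and AP: "A = root_family P"
      unfolding root_family_def by (rule subset_imageE)
    with A root_family_in_AsJ_iff[OF P] show "A \<in> root_family ` linked_families ({1..n} - J) s"
      unfolding linked_families_def by blast
  qed
next
  show "root_family ` linked_families ({1..n} - J) s \<subseteq> AsJ n s J"
  proof
    fix A assume "A \<in> root_family ` linked_families ({1..n} - J) s"
    then obtain P where P: "linked ({1..n} - J) P" "card P = s" and AP: "A = root_family P"
      unfolding linked_families_def by blast
    moreover from P(1) have "P \<subseteq> intervals n" unfolding linked_def intervals_def by auto
    ultimately show "A \<in> AsJ n s J" using root_family_in_AsJ_iff by blast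
  qed
qed

lemma linked_Diff_iff:
  "linked (K - J) P \<longleftrightarrow> linked K P \<and> (\<forall>i j. (i, j) \<in> P \<longrightarrow> i \<notin> J \<and> j \<notin> J)"
  unfolding linked_def by blast

theorem AsJ_restrict:
  "AsJ n s J = {A \<in> AsJ n s {}. \<forall>i j. alpha i j \<in> A \<longrightarrow> i \<notin> J \<and> j \<notin> J}"
proof (intro set_eqI iffI)
  fix A assume "A \<in> AsJ n s J"
  then obtain P where P: "linked ({1..n} - J) P" "card P = s" and AP: "A = root_family P"
    unfolding AsJ_eq_linked_families linked_families_def by blast
  then have "A \<in> AsJ n s {}"
    unfolding AsJ_eq_linked_families linked_families_def linked_Diff_iff by auto
  moreover have "i \<notin> J \<and> j \<notin> J" if "alpha i j \<in> A" for i j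
    using that P(1) alpha_in_root_family_iff[OF linked_ordered[OF P(1)]]
    unfolding AP linked_Diff_iff by blast
  ultimately show "A \<in> {A \<in> AsJ n s {}. \<forall>i j. alpha i j \<in> A \<longrightarrow> i \<notin> J \<and> j \<notin> J}"
    by blast
next
  fix A assume "A \<in> {A \<in> AsJ n s {}. \<forall>i j. alpha i j \<in> A \<longrightarrow> i \<notin> J \<and> j \<notin> J}"
  then have A: "A \<in> AsJ n s {}" and outside: "\<forall>i j. alpha i j \<in> A \<longrightarrow> i \<notin> J \<and> j \<notin> J"
    by blast+
  from A obtain P where P: "linked {1..n} P" "card P = s" and AP: "A = root_family P"
    unfolding AsJ_eq_linked_families linked_families_def by auto
  have "i \<notin> J \<and> j \<notin> J" if "(i, j) \<in> P" for i j
    using that outside alpha_in_root_family_iff[OF linked_ordered[OF P(1)]] unfolding AP by blast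
  with P have "linked ({1..n} - J) P" unfolding linked_Diff_iff by blast
  with P(2) AP show "A \<in> AsJ n s J" unfolding AsJ_eq_linked_families linked_families_def by blast
qed

lemma card_AsJ: "card (AsJ n s J) = card (linked_families ({1..n} - J) s)"
  unfolding AsJ_eq_linked_families
proof (rule card_image, rule inj_on_subset)
  show "inj_on root_family (Pow {(i, j). i \<le> j})"
    using inj_on_image_Pow[OF inj_on_alpha] unfolding root_family_def[abs_def] .
  show "linked_families ({1..n} - J) s \<subseteq> Pow {(i, j). i \<le> j}"
    using linked_ordered unfolding linked_families_def by blast
qed

definition endpoints :: "(nat \<times> nat) set \<Rightarrow> nat set" where
  "endpoints P = fst ` P \<union> snd ` P"

definition half_size_subsets :: "'a set \<Rightarrow> nat \<Rightarrow> 'a set set" where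
  "half_size_subsets K s = {S. S \<subseteq> K \<and> (card S = 2 * s \<or> card S = 2 * s - 1)}"

definition from_endpoints :: "nat \<Rightarrow> nat set \<Rightarrow> (nat \<times> nat) set" where
  "from_endpoints s S =
     (let xs = sorted_list_of_set S in set (zip (take s xs) (drop (card S - s) xs)))"

lemma sorted_list_of_set_strict_sorted:
  "sorted_wrt (<) xs \<Longrightarrow> sorted_list_of_set (set xs) = xs"
  by (simp add: sorted_list_of_set_sort_remdups strict_sorted_iff distinct_remdups_id sorted_sort_id)

lemma set_zip_take_drop:
  assumes "d + s = length xs"
  shows "p \<in> set (zip (take s xs) (drop d xs)) \<longleftrightarrow> (\<exists>a<s. p = (xs ! a, xs ! (d + a)))"
proof
  assume "\<exists>a<s. p = (xs ! a, xs ! (d + a))"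
  then obtain a where "a < s" "p = (xs ! a, xs ! (d + a))" by blast
  with assms show "p \<in> set (zip (take s xs) (drop d xs))"
    by (auto simp: in_set_zip intro!: exI[of _ a])
qed (use assms in \<open>auto simp: in_set_zip\<close>)

lemma zip_take_drop_linked:
  assumes sorted: "sorted_wrt (<) xs" and "s \<le> Suc d" and len: "d + s = length xs"
  shows "linked (set xs) (set (zip (take s xs) (drop d xs)))"
proof -
  have less: "xs ! a < xs ! b" if "a < b" "b < length xs" for a b
    using sorted that unfolding sorted_wrt_iff_nth_less by auto
  have le: "xs ! a \<le> xs ! b" if "a \<le> b" "b < length xs" for a b
    using less[of a b] that by (cases "a = b") auto
  let ?P = "set (zip (take s xs) (drop d xs))"
  have "i \<in> set xs \<and> j \<in> set xs \<and> i \<le> j" if "(i, j) \<in> ?P" for i j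
  proof -
    from that obtain a where "a < s" "i = xs ! a" "j = xs ! (d + a)"
      unfolding set_zip_take_drop[OF len] by blast
    with assms le[of a "d + a"] show ?thesis by auto
  qed
  moreover have "\<not> (k \<le> i \<and> j \<le> l)" if "(i, j) \<in> ?P" "(k, l) \<in> ?P" "(i, j) \<noteq> (k, l)"
    for i j k l
  proof -
    from that obtain a b where "a < s" "i = xs ! a" "j = xs ! (d + a)"
      "b < s" "k = xs ! b" "l = xs ! (d + b)"
      unfolding set_zip_take_drop[OF len] by blast
    with that(3) assms less[of a b] less[of b a] less[of "d + a" "d + b"] less[of "d + b" "d + a"]
    show ?thesis by (cases a b rule: linorder_cases) auto
  qed
  moreover have "i \<le> l" if "(i, j) \<in> ?P" "(k, l) \<in> ?P" for i j k l
  proof -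
    from that obtain a b where "a < s" "i = xs ! a" "b < s" "l = xs ! (d + b)"
      unfolding set_zip_take_drop[OF len] by blast
    with assms le[of a "d + b"] show ?thesis by auto
  qed
  ultimately show ?thesis unfolding linked_def by blast
qed

lemma card_zip_take_drop:
  fixes xs :: "'a::linorder list"
  assumes "sorted_wrt (<) xs" and "d + s = length xs"
  shows "card (set (zip (take s xs) (drop d xs))) = s"
proof -
  have "distinct (zip (take s xs) (drop d xs))"
    using assms(1) by (intro distinct_zipI1) (metis distinct_take strict_sorted_iff)
  then show ?thesis using assms(2) by (simp add: distinct_card)
qed

lemma endpoints_zip_take_drop:
  assumes "d \<le> s" and "d + s = length xs"
  shows "endpoints (set (zip (take s xs) (drop d xs))) = set xs"
proof -
  have lens: "length (take s xs) = length (drop d xs)" using assms(2) by simp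
  have "fst ` set (zip (take s xs) (drop d xs)) = set (take s xs)"
    "snd ` set (zip (take s xs) (drop d xs)) = set (drop d xs)"
    using map_fst_zip[OF lens] map_snd_zip[OF lens] by (simp_all only: set_map[symmetric])
  moreover have "set (take s xs) \<union> set (drop d xs) = set xs"
  proof
    have "set xs = set (take s xs) \<union> set (drop s xs)"
      unfolding set_append[symmetric] by simp
    moreover have "set (drop s xs) \<subseteq> set (drop d xs)"
      using assms(1) by (rule set_drop_subset_set_drop)
    ultimately show "set xs \<subseteq> set (take s xs) \<union> set (drop d xs)" by blast
  qed (intro Un_least set_take_subset set_drop_subset)
  ultimately show ?thesis unfolding endpoints_def by simp
qed

lemma from_endpoints_linked:
  assumes "finite S" and size: "card S = 2 * s \<or> card S = 2 * s - 1"
  shows "linked S (from_endpoints s S) \<and> card (from_endpoints s S) = s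
    \<and> endpoints (from_endpoints s S) = S"
proof -
  let ?xs = "sorted_list_of_set S"
  have xs: "sorted_wrt (<) ?xs" "set ?xs = S" "length ?xs = card S" using assms(1) by simp_all
  have d: "card S - s \<le> s" "s \<le> Suc (card S - s)" "card S - s + s = card S"
    using size by auto
  show ?thesis
    unfolding from_endpoints_def Let_def
    using zip_take_drop_linked[OF xs(1), of s "card S - s"] card_zip_take_drop[OF xs(1), of "card S - s" s]
      endpoints_zip_take_drop[of "card S - s" s ?xs] xs d by simp
qed

(* In a linked family the order of the left endpoints agrees with that of the right
   endpoints, so the family is the zip of the two sorted endpoint lists. *)
lemma linked_left_unique:
  assumes "linked K P" "(i, j) \<in> P" "(i, l) \<in> P"
  shows "j = l"
proof (rule ccontr)
  assume "j \<noteq> l"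
  with assms have "\<not> (i \<le> i \<and> j \<le> l)" "\<not> (i \<le> i \<and> l \<le> j)"
    unfolding linked_def by blast+
  then show False by linarith
qed

lemma linked_strict_mono:
  assumes "linked K P" "(i, j) \<in> P" "(k, l) \<in> P" "i < k"
  shows "j < l"
proof (rule ccontr)
  assume "\<not> j < l"
  with assms have "(k, l) \<noteq> (i, j)" "i \<le> k \<and> l \<le> j" by auto
  with assms show False unfolding linked_def by blast
qed

lemma linked_as_zip:
  assumes P: "linked K P" "finite P"
  defines "ls \<equiv> sorted_list_of_set (fst ` P)" and "rs \<equiv> sorted_list_of_set (snd ` P)"
  shows "P = set (zip ls rs) \<and> length ls = card P \<and> length rs = card P"
proof -
  define L where "L = fst ` P"
  define g where "g i = (THE j. (i, j) \<in> P)" for i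
  have graph: "(i, j) \<in> P \<longleftrightarrow> i \<in> L \<and> j = g i" for i j
  proof
    assume ij: "(i, j) \<in> P"
    then have "(THE j. (i, j) \<in> P) = j" using linked_left_unique[OF P(1) ij] by blast
    with ij show "i \<in> L \<and> j = g i" unfolding L_def g_def by force
  next
    assume "i \<in> L \<and> j = g i"
    then obtain j' where ij': "(i, j') \<in> P" "j = g i" unfolding L_def by force
    then have "(THE j. (i, j) \<in> P) = j'" using linked_left_unique[OF P(1) ij'(1)] by blast
    with ij' show "(i, j) \<in> P" unfolding g_def by simp
  qed
  then have P_graph: "P = (\<lambda>i. (i, g i)) ` L" by auto
  have "inj_on fst P" using linked_left_unique[OF P(1)] unfolding inj_on_def by auto
  then have card_L: "card L = card P" unfolding L_def by (rule card_image)
  have L: "sorted_wrt (<) ls" "set ls = L" "length ls = card P"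
    unfolding ls_def L_def[symmetric] using P(2) card_L by (simp_all add: L_def)
  have "sorted_wrt (<) (map g ls)"
    unfolding sorted_wrt_map
    by (rule sorted_wrt_mono_rel[OF _ L(1)]) (use graph linked_strict_mono[OF P(1)] L(2) in blast)
  moreover have "set (map g ls) = snd ` P" using L(2) P_graph by (simp add: image_image)
  ultimately have "rs = map g ls" unfolding rs_def using sorted_list_of_set_strict_sorted by metis
  then have "zip ls rs = map (\<lambda>i. (i, g i)) ls" by (simp add: zip_map2 zip_same_conv_map)
  with P_graph L show ?thesis using \<open>rs = map g ls\<close> by simp
qed

lemma sorted_touching_union:
  fixes ls rs :: "'a::linorder list"
  assumes ls: "sorted_wrt (<) ls" and rs: "sorted_wrt (<) rs" and len: "length rs = length ls"
    and below: "\<forall>x\<in>set ls. \<forall>y\<in>set rs. x \<le> y"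
  defines "xs \<equiv> sorted_list_of_set (set ls \<union> set rs)"
  shows "(length xs = 2 * length ls \<or> length xs = 2 * length ls - 1)
    \<and> take (length ls) xs = ls \<and> drop (length xs - length ls) xs = rs"
proof (cases "set ls \<inter> set rs = {}")
  case True
  with below have "sorted_wrt (<) (ls @ rs)"
    using ls rs unfolding sorted_wrt_append by fastforce
  then have "xs = ls @ rs" unfolding xs_def using sorted_list_of_set_strict_sorted by fastforce
  with len show ?thesis by simp
next
  case False
  then obtain p where p: "p \<in> set ls" "p \<in> set rs" by blast
  then obtain ls' x rs' y where split: "ls = ls' @ [x]" "rs = y # rs'"
    by (metis list.exhaust rev_exhaust empty_iff empty_set)
  have "p \<le> x" using ls p(1) unfolding split sorted_wrt_append by auto
  moreover have "y \<le> p" using rs p(2) unfolding split by auto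
  moreover have "x \<le> y" using below unfolding split by simp
  ultimately have "y = x" by simp
  with ls rs have "sorted_wrt (<) (ls' @ x # rs')"
    unfolding split sorted_wrt_append by (auto intro: less_trans)
  then have "xs = ls' @ x # rs'"
    unfolding xs_def split \<open>y = x\<close> using sorted_list_of_set_strict_sorted by fastforce
  with len show ?thesis unfolding split \<open>y = x\<close> by simp
qed

lemma endpoints_of_linked:
  assumes P: "linked K P" "finite P"
  shows "endpoints P \<in> half_size_subsets K (card P) \<and> from_endpoints (card P) (endpoints P) = P"
proof -
  define ls where "ls = sorted_list_of_set (fst ` P)"
  define rs where "rs = sorted_list_of_set (snd ` P)"
  have zip: "P = set (zip ls rs)" "length ls = card P" "length rs = card P"
    using linked_as_zip[OF P] unfolding ls_def rs_def by blast+
  have sets: "set ls = fst ` P" "set rs = snd ` P" and sorted: "sorted_wrt (<) ls" "sorted_wrt (<) rs"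
    using P(2) unfolding ls_def rs_def by simp_all
  have ends: "endpoints P = set ls \<union> set rs" unfolding endpoints_def sets ..
  have "\<forall>x\<in>set ls. \<forall>y\<in>set rs. x \<le> y" using P(1) unfolding sets linked_def by force
  from sorted_touching_union[OF sorted zip(3)[folded zip(2)] this]
  have "card (endpoints P) = 2 * card P \<or> card (endpoints P) = 2 * card P - 1"
    and "from_endpoints (card P) (endpoints P) = set (zip ls rs)"
    unfolding from_endpoints_def Let_def ends zip(2) by simp_all
  moreover have "endpoints P \<subseteq> K" using P(1) unfolding endpoints_def linked_def by force
  ultimately show ?thesis using zip(1) unfolding half_size_subsets_def by blast
qed

lemma finite_linked: "finite K \<Longrightarrow> linked K P \<Longrightarrow> finite P"
  unfolding linked_def by (rule finite_subset[of _ "K \<times> K"]) auto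

lemma linked_mono: "linked S P \<Longrightarrow> S \<subseteq> K \<Longrightarrow> linked K P"
  unfolding linked_def by blast

theorem card_linked_families:
  assumes K: "finite K"
  shows "card (linked_families K s) = card (half_size_subsets K s)"
proof -
  have to_subsets: "endpoints P \<in> half_size_subsets K s \<and> from_endpoints s (endpoints P) = P"
    if "P \<in> linked_families K s" for P
  proof -
    from that have P: "linked K P" "card P = s" unfolding linked_families_def by auto
    from endpoints_of_linked[OF P(1) finite_linked[OF K P(1)]] show ?thesis unfolding P(2) .
  qed
  have to_families: "from_endpoints s S \<in> linked_families K s \<and> endpoints (from_endpoints s S) = S"
    if "S \<in> half_size_subsets K s" for S
  proof -
    from that have S: "S \<subseteq> K" "card S = 2 * s \<or> card S = 2 * s - 1"
      unfolding half_size_subsets_def by auto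
    with from_endpoints_linked[OF finite_subset[OF S(1) K] S(2)] linked_mono[of S _ K]
    show ?thesis unfolding linked_families_def by blast
  qed
  have "bij_betw endpoints (linked_families K s) (half_size_subsets K s)"
    by (rule bij_betw_byWitness[where f' = "from_endpoints s"]) (use to_subsets to_families in blast)+
  then show ?thesis by (rule bij_betw_same_card)
qed

lemma half_size_iff: "(m = 2 * s \<or> m = 2 * s - 1) \<longleftrightarrow> (m + 1) div 2 = (s::nat)"
  by presburger

lemma card_half_size_subsets:
  assumes K: "finite K" and s: "1 \<le> s"
  shows "card (half_size_subsets K s)
    = (card K choose (2 * s)) + (card K choose (2 * s - 1))"
proof -
  have "half_size_subsets K s
      = {S. S \<subseteq> K \<and> card S = 2 * s} \<union> {S. S \<subseteq> K \<and> card S = 2 * s - 1}"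
    unfolding half_size_subsets_def by blast
  also have "card \<dots> = card {S. S \<subseteq> K \<and> card S = 2 * s} + card {S. S \<subseteq> K \<and> card S = 2 * s - 1}"
    using K s by (intro card_Un_disjoint) auto
  finally show ?thesis by (simp add: n_subsets[OF K])
qed

(* Summing over s counts every subset of K exactly once. *)
lemma half_size_subsets_sums:
  assumes K: "finite K"
  shows "(\<lambda>s. real (card (half_size_subsets K s))) sums 2 ^ card K"
proof -
  define half where "half S = (card S + 1) div 2" for S :: "'a set"
  have fibre: "half_size_subsets K s = {S \<in> Pow K. half S = s}" for s
    unfolding half_size_subsets_def half_def half_size_iff by blast
  have half_le: "half ` Pow K \<subseteq> {..card K}"
  proof
    fix h assume "h \<in> half ` Pow K"
    then obtain S where "S \<subseteq> K" "h = half S" by blast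
    moreover from \<open>S \<subseteq> K\<close> have "card S \<le> card K" by (rule card_mono[OF K])
    ultimately show "h \<in> {..card K}" unfolding half_def by simp
  qed
  have "(\<Sum>s\<le>card K. card {S \<in> Pow K. half S = s}) = card (Pow K)"
    using sum.group[OF finite_Pow_iff[THEN iffD2, OF K] finite_atMost half_le, of "\<lambda>_. 1 :: nat"]
    by simp
  also have "\<dots> = 2 ^ card K" using card_Pow[OF K] .
  finally have total: "(\<Sum>s\<le>card K. real (card {S \<in> Pow K. half S = s})) = 2 ^ card K"
    by (simp flip: of_nat_sum)
  have "real (card {S \<in> Pow K. half S = s}) = 0" if "s \<notin> {..card K}" for s
  proof -
    have "{S \<in> Pow K. half S = s} = {}" using that half_le by blast
    then show ?thesis by (simp only: card.empty of_nat_0)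
  qed
  then have "(\<lambda>s. real (card {S \<in> Pow K. half S = s})) sums (\<Sum>s\<le>card K. real (card {S \<in> Pow K. half S = s}))"
    by (rule sums_finite[OF finite_atMost])
  then show ?thesis unfolding fibre total .
qed

theorem mainTheorem7:
  fixes n s :: nat and J :: "nat set"
  assumes "J \<subseteq> {1..n}"
  shows "(s \<ge> 1 \<longrightarrow>
           AsJ n s J = {A \<in> AsJ n s {}. \<forall>i j. alpha i j \<in> A \<longrightarrow> i \<notin> J \<and> j \<notin> J})
       \<and> (s \<ge> 1 \<longrightarrow>
           card (AsJ n s J) = ((n - card J) choose (2 * s)) + ((n - card J) choose (2 * s - 1)))
       \<and> ((\<lambda>t. real (card (AsJ n t J))) sums (2 ^ (n - card J)))"
proof -
  define K where "K = {1..n} - J"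
  have K: "finite K" unfolding K_def by simp
  have card_K: "card K = n - card J"
    unfolding K_def using assms by (simp add: card_Diff_subset finite_subset)
  have count: "card (AsJ n t J) = card (half_size_subsets K t)" for t
    unfolding card_AsJ K_def[symmetric] using card_linked_families[OF K] .
  show ?thesis
    using AsJ_restrict[of n s J] card_half_size_subsets[OF K, of s]
      half_size_subsets_sums[OF K]
    unfolding count card_K by blast
qed

end
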